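(* Let $P$ and $Q$ be posets. If the product space $\Sigma P\times \Sigma Q$ is a Fréchet space, then the Scott topology of the product poset $P\times Q$ coincides with the product topology of $\Sigma P$ and $\Sigma Q$, i.e. $\Sigma(P\times Q)=\Sigma P\times\Sigma Q$.
   Context: For a poset $P$, a subset $U\subseteq P$ is Scott open if $U$ is an upper set and for every directed $D\subseteq P$ whose supremum $\bigvee D$ exists, $\bigvee D\in U$ implies $D\cap U\neq\emptyset$. The Scott open sets form the Scott topology $\sigma(P)$, and $\Sigma P=(P,\sigma(P))$. The product poset $P\times Q$ carries the coordinatewise order. A topological space $X$ is a Fréchet space if for every subset $A\subseteq X$ and every $x$ in the closure of $A$, there is a sequence $(x_n)_{n\in\omega}$ of elements of $A$ converging to $x$. *)

theory Defs
  imports "HOL-Analysis.Analysis"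
begin

definition directed_rel :: "('a \<Rightarrow> 'a \<Rightarrow> bool) \<Rightarrow> 'a set \<Rightarrow> bool" where
  "directed_rel le D \<longleftrightarrow> D \<noteq> {} \<and> (\<forall>x\<in>D. \<forall>y\<in>D. \<exists>z\<in>D. le x z \<and> le y z)"

definition is_sup_rel :: "('a \<Rightarrow> 'a \<Rightarrow> bool) \<Rightarrow> 'a set \<Rightarrow> 'a \<Rightarrow> bool" where
  "is_sup_rel le D s \<longleftrightarrow> (\<forall>x\<in>D. le x s) \<and> (\<forall>u. (\<forall>x\<in>D. le x u) \<longrightarrow> le s u)"

definition scott_open_rel :: "('a \<Rightarrow> 'a \<Rightarrow> bool) \<Rightarrow> 'a set \<Rightarrow> bool" where
  "scott_open_rel le U \<longleftrightarrow>
     (\<forall>x y. x \<in> U \<longrightarrow> le x y \<longrightarrow> y \<in> U) \<and>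
     (\<forall>D s. directed_rel le D \<longrightarrow> is_sup_rel le D s \<longrightarrow> s \<in> U \<longrightarrow> D \<inter> U \<noteq> {})"

definition scott_topology_rel :: "('a \<Rightarrow> 'a \<Rightarrow> bool) \<Rightarrow> 'a topology" where
  "scott_topology_rel le = topology (scott_open_rel le)"

abbreviation scott_topology :: "('a::order) topology" where
  "scott_topology \<equiv> scott_topology_rel (\<le>)"

definition prod_le :: "('a::order) \<times> ('b::order) \<Rightarrow> 'a \<times> 'b \<Rightarrow> bool" where
  "prod_le p q \<longleftrightarrow> fst p \<le> fst q \<and> snd p \<le> snd q"

definition frechet_space :: "'a topology \<Rightarrow> bool" where
  "frechet_space X \<longleftrightarrow>
     (\<forall>A x. A \<subseteq> topspace X \<longrightarrow> x \<in> X closure_of A \<longrightarrow>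
        (\<exists>s::nat \<Rightarrow> 'a. (\<forall>n. s n \<in> A) \<and> limitin X s x sequentially))"

end

theory Submission
  imports Defs
begin

text \<open>
  Every open box of \<open>\<Sigma>P \<times> \<Sigma>Q\<close> is Scott open in \<open>P \<times> Q\<close>, since the projections are Scott
  continuous. Conversely, let \<open>U\<close> be Scott open in \<open>P \<times> Q\<close>, \<open>(a, b) \<in> U\<close>, and let \<open>x\<^sub>n \<rightarrow> a\<close>
  and \<open>y\<^sub>n \<rightarrow> b\<close> in the Scott topologies. The sections of \<open>U\<close> are Scott open, so
  \<open>(a, y\<^sub>n) \<in> U\<close> for \<open>n \<ge> N\<close>, and the set of those \<open>p\<close> with \<open>(p, b) \<in> U\<close> and \<open>(p, y\<^sub>n) \<in> U\<close> for
  all \<open>n \<ge> N\<close> is again Scott open: a directed set whose supremum lies in it has an element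
  \<open>d\<close> with \<open>(d, b) \<in> U\<close>, hence \<open>(d, y\<^sub>n) \<in> U\<close> for almost all \<open>n\<close>, and the finitely many remaining
  indices are handled by one more element of the directed set. As \<open>x\<^sub>n\<close> eventually lies in
  this set, \<open>(x\<^sub>n, y\<^sub>n)\<close> is eventually in \<open>U\<close>. So Scott open sets of \<open>P \<times> Q\<close> are sequentially
  open in \<open>\<Sigma>P \<times> \<Sigma>Q\<close>, and in a Frechet space sequentially open sets are open.
\<close>

lemma scott_open_rel_upclosed:
  "scott_open_rel le U \<Longrightarrow> x \<in> U \<Longrightarrow> le x y \<Longrightarrow> y \<in> U"
  unfolding scott_open_rel_def by blast

lemma scott_open_rel_directed_sup:
  assumes "scott_open_rel le U" "directed_rel le D" "is_sup_rel le D s" "s \<in> U"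
  obtains d where "d \<in> D" "d \<in> U"
  using assms unfolding scott_open_rel_def by blast

lemma istopology_scott_open_rel: "istopology (scott_open_rel le)"
  unfolding istopology_def
proof (intro conjI allI impI)
  fix S T assume S: "scott_open_rel le S" and T: "scott_open_rel le T"
  show "scott_open_rel le (S \<inter> T)"
    unfolding scott_open_rel_def
  proof (intro conjI allI impI)
    fix x y assume "x \<in> S \<inter> T" "le x y"
    then show "y \<in> S \<inter> T" using scott_open_rel_upclosed[OF S] scott_open_rel_upclosed[OF T] by blast
  next
    fix D s assume D: "directed_rel le D" and s: "is_sup_rel le D s" and "s \<in> S \<inter> T"
    obtain d\<^sub>1 where "d\<^sub>1 \<in> D" "d\<^sub>1 \<in> S"
      using scott_open_rel_directed_sup[OF S D s] \<open>s \<in> S \<inter> T\<close> by blast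
    obtain d\<^sub>2 where "d\<^sub>2 \<in> D" "d\<^sub>2 \<in> T"
      using scott_open_rel_directed_sup[OF T D s] \<open>s \<in> S \<inter> T\<close> by blast
    obtain z where "z \<in> D" "le d\<^sub>1 z" "le d\<^sub>2 z"
      using D \<open>d\<^sub>1 \<in> D\<close> \<open>d\<^sub>2 \<in> D\<close> unfolding directed_rel_def by blast
    then have "z \<in> S \<inter> T"
      using scott_open_rel_upclosed[OF S \<open>d\<^sub>1 \<in> S\<close>] scott_open_rel_upclosed[OF T \<open>d\<^sub>2 \<in> T\<close>] by blast
    then show "D \<inter> (S \<inter> T) \<noteq> {}" using \<open>z \<in> D\<close> by blast
  qed
next
  fix K assume K: "\<forall>S\<in>K. scott_open_rel le S"
  show "scott_open_rel le (\<Union>K)"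
    unfolding scott_open_rel_def
  proof (intro conjI allI impI)
    fix x y assume "x \<in> \<Union>K" "le x y"
    then obtain S where "S \<in> K" "x \<in> S" by blast
    then show "y \<in> \<Union>K" using K scott_open_rel_upclosed[of le S x y] \<open>le x y\<close> by blast
  next
    fix D s assume D: "directed_rel le D" and s: "is_sup_rel le D s" and "s \<in> \<Union>K"
    obtain S where "S \<in> K" "s \<in> S" using \<open>s \<in> \<Union>K\<close> by blast
    then obtain d where "d \<in> D" "d \<in> S"
      using K scott_open_rel_directed_sup[OF _ D s, of S] by blast
    then show "D \<inter> \<Union>K \<noteq> {}" using \<open>S \<in> K\<close> by blast
  qed
qed

lemma openin_scott_topology_rel: "openin (scott_topology_rel le) U \<longleftrightarrow> scott_open_rel le U"
  unfolding scott_topology_rel_def by (simp add: topology_inverse'[OF istopology_scott_open_rel])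

lemma topspace_scott_topology_rel [simp]: "topspace (scott_topology_rel le) = UNIV"
proof -
  have "scott_open_rel le UNIV" unfolding scott_open_rel_def directed_rel_def by auto
  then show ?thesis unfolding topspace_def openin_scott_topology_rel by blast
qed

lemma limitin_scott_topology_rel_eventually:
  assumes "limitin (scott_topology_rel le) s l F" "scott_open_rel le V" "l \<in> V"
  shows "eventually (\<lambda>n. s n \<in> V) F"
  using assms unfolding limitin_def openin_scott_topology_rel by blast

lemma directed_rel_image:
  assumes "directed_rel le D" "\<And>x y. le x y \<Longrightarrow> le' (f x) (f y)"
  shows "directed_rel le' (f ` D)"
  using assms unfolding directed_rel_def by (simp add: image_iff) blast

lemma scott_open_rel_vimage:
  assumes U: "scott_open_rel le' U"
    and mono: "\<And>x y. le x y \<Longrightarrow> le' (f x) (f y)"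
    and sup: "\<And>D s. directed_rel le D \<Longrightarrow> is_sup_rel le D s \<Longrightarrow> is_sup_rel le' (f ` D) (f s)"
  shows "scott_open_rel le (f -` U)"
  unfolding scott_open_rel_def
proof (intro conjI allI impI)
  fix x y assume "x \<in> f -` U" "le x y"
  then show "y \<in> f -` U" using scott_open_rel_upclosed[OF U _ mono] by simp
next
  fix D s assume D: "directed_rel le D" and s: "is_sup_rel le D s" and "s \<in> f -` U"
  then obtain d where "d \<in> f ` D" "d \<in> U"
    using scott_open_rel_directed_sup[OF U directed_rel_image[where f = f and le' = le', OF D mono]
        sup[OF D s]]
    by auto
  then show "D \<inter> f -` U \<noteq> {}" by auto
qed

lemma is_sup_rel_prod_le_iff:
  "is_sup_rel prod_le D (s, t) \<longleftrightarrow> is_sup_rel (\<le>) (fst ` D) s \<and> is_sup_rel (\<le>) (snd ` D) t"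
  unfolding is_sup_rel_def prod_le_def by fastforce

lemma is_sup_rel_singleton: "is_sup_rel (\<le>) {p} (p::'a::order)"
  unfolding is_sup_rel_def by simp

lemma scott_open_rel_vimage_fst:
  assumes "scott_open_rel (\<le>) V"
  shows "scott_open_rel (prod_le :: 'a::order \<times> 'b::order \<Rightarrow> _) (fst -` V)"
  by (rule scott_open_rel_vimage[OF assms]) (auto simp: prod_le_def is_sup_rel_prod_le_iff)

lemma scott_open_rel_vimage_snd:
  assumes "scott_open_rel (\<le>) W"
  shows "scott_open_rel (prod_le :: 'a::order \<times> 'b::order \<Rightarrow> _) (snd -` W)"
  by (rule scott_open_rel_vimage[OF assms]) (auto simp: prod_le_def is_sup_rel_prod_le_iff)

lemma scott_open_rel_section_left:
  fixes U :: "('a::order \<times> 'b::order) set"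
  assumes "scott_open_rel prod_le U"
  shows "scott_open_rel (\<le>) {p. (p, q) \<in> U}"
proof -
  have "scott_open_rel (\<le>) ((\<lambda>p. (p, q)) -` U)"
  proof (rule scott_open_rel_vimage[OF assms])
    fix D :: "'a set" and s assume "directed_rel (\<le>) D" "is_sup_rel (\<le>) D s"
    moreover have "snd ` (\<lambda>p. (p, q)) ` D = {q}" using \<open>directed_rel (\<le>) D\<close>
      unfolding directed_rel_def by (simp add: image_image image_constant_conv)
    ultimately show "is_sup_rel prod_le ((\<lambda>p. (p, q)) ` D) (s, q)"
      by (simp add: is_sup_rel_prod_le_iff image_image is_sup_rel_singleton)
  qed (simp add: prod_le_def)
  then show ?thesis by (simp add: vimage_def)
qed

lemma scott_open_rel_section_right:
  fixes U :: "('a::order \<times> 'b::order) set"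
  assumes "scott_open_rel prod_le U"
  shows "scott_open_rel (\<le>) {q. (p, q) \<in> U}"
proof -
  have "scott_open_rel (\<le>) (Pair p -` U)"
  proof (rule scott_open_rel_vimage[OF assms])
    fix D :: "'b set" and t assume "directed_rel (\<le>) D" "is_sup_rel (\<le>) D t"
    moreover have "fst ` Pair p ` D = {p}" using \<open>directed_rel (\<le>) D\<close>
      unfolding directed_rel_def by (simp add: image_image image_constant_conv)
    ultimately show "is_sup_rel prod_le (Pair p ` D) (p, t)"
      by (simp add: is_sup_rel_prod_le_iff image_image is_sup_rel_singleton)
  qed (simp add: prod_le_def)
  then show ?thesis by (simp add: vimage_def)
qed

lemma openin_prod_topology_imp_scott_open_rel:
  fixes U :: "('a::order \<times> 'b::order) set"
  assumes "openin (prod_topology scott_topology scott_topology) U"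
  shows "scott_open_rel prod_le U"
proof -
  have "\<exists>T. openin (scott_topology_rel prod_le) T \<and> z \<in> T \<and> T \<subseteq> U" if "z \<in> U" for z
  proof -
    obtain V W where VW: "scott_open_rel (\<le>) V" "scott_open_rel (\<le>) W"
        "fst z \<in> V" "snd z \<in> W" "V \<times> W \<subseteq> U"
      using assms \<open>z \<in> U\<close> unfolding openin_prod_topology_alt openin_scott_topology_rel
      by (metis prod.collapse)
    have "openin (scott_topology_rel prod_le) (fst -` V \<inter> snd -` W)"
      using VW(1,2) by (intro openin_Int)
        (simp_all add: openin_scott_topology_rel scott_open_rel_vimage_fst scott_open_rel_vimage_snd)
    moreover have "fst -` V \<inter> snd -` W = V \<times> W" by auto
    ultimately have "openin (scott_topology_rel prod_le) (V \<times> W)" by simp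
    with VW show ?thesis by (metis mem_Times_iff)
  qed
  then have "openin (scott_topology_rel prod_le) U" by (subst openin_subopen) blast
  then show ?thesis by (simp add: openin_scott_topology_rel)
qed

lemma scott_open_rel_tail_section:
  fixes U :: "('a::order \<times> 'b::order) set"
  assumes U: "scott_open_rel prod_le U"
    and y: "limitin scott_topology y b sequentially"
  shows "scott_open_rel (\<le>) {p. (p, b) \<in> U \<and> (\<forall>n\<ge>N. (p, y n) \<in> U)}" (is "scott_open_rel _ ?V")
proof -
  have up: "(p', q) \<in> U" if "(p, q) \<in> U" "p \<le> p'" for p p' q
    using scott_open_rel_upclosed[OF U that(1)] that(2) by (simp add: prod_le_def)
  show ?thesis
    unfolding scott_open_rel_def
  proof (intro conjI allI impI)
    fix p p' assume "p \<in> ?V" "p \<le> p'"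
    then show "p' \<in> ?V" using up[of p _ p'] by simp
  next
    fix D s assume D: "directed_rel (\<le>) D" and s: "is_sup_rel (\<le>) D s" and "s \<in> ?V"
    obtain d\<^sub>0 where d\<^sub>0: "d\<^sub>0 \<in> D" "(d\<^sub>0, b) \<in> U"
      using scott_open_rel_directed_sup[OF scott_open_rel_section_left[OF U] D s] \<open>s \<in> ?V\<close> by auto
    have "eventually (\<lambda>n. y n \<in> {q. (d\<^sub>0, q) \<in> U}) sequentially"
      using limitin_scott_topology_rel_eventually[OF y scott_open_rel_section_right[OF U]] d\<^sub>0 by simp
    then obtain N' where N': "\<And>n. n \<ge> N' \<Longrightarrow> (d\<^sub>0, y n) \<in> U"
      unfolding eventually_sequentially by auto
    \<comment> \<open>Only the finitely many indices in \<open>{N..<N'}\<close> are not yet covered by \<open>d\<^sub>0\<close>.\<close>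
    let ?W = "{p. (p, b) \<in> U} \<inter> (\<Inter>n\<in>{N..<N'}. {p. (p, y n) \<in> U})"
    have "openin scott_topology (\<Inter>n\<in>{N..<N'}. {p. (p, y n) \<in> U})"
      using openin_INT[of "{N..<N'}" scott_topology "\<lambda>n. {p. (p, y n) \<in> U}"]
        scott_open_rel_section_left[OF U] by (simp add: openin_scott_topology_rel)
    moreover have "openin scott_topology {p. (p, b) \<in> U}"
      using scott_open_rel_section_left[OF U] by (simp add: openin_scott_topology_rel)
    ultimately have W: "scott_open_rel (\<le>) ?W" by (simp add: openin_Int flip: openin_scott_topology_rel)
    have "s \<in> ?W" using \<open>s \<in> ?V\<close> by auto
    then obtain d\<^sub>1 where d\<^sub>1: "d\<^sub>1 \<in> D" "d\<^sub>1 \<in> ?W"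
      by (rule scott_open_rel_directed_sup[OF W D s])
    obtain z where z: "z \<in> D" "d\<^sub>0 \<le> z" "d\<^sub>1 \<le> z"
      using D d\<^sub>0(1) d\<^sub>1(1) unfolding directed_rel_def by blast
    have "(z, y n) \<in> U" if "N \<le> n" for n
    proof (cases "n < N'")
      case True
      then show ?thesis using up[of d\<^sub>1 "y n" z] d\<^sub>1 z \<open>N \<le> n\<close> by auto
    next
      case False
      then show ?thesis using up[OF N' z(2)] by simp
    qed
    moreover have "(z, b) \<in> U" using up[OF d\<^sub>0(2) z(2)] .
    ultimately show "D \<inter> ?V \<noteq> {}" using z(1) by blast
  qed
qed

lemma eventually_in_scott_open_rel_prod:
  fixes U :: "('a::order \<times> 'b::order) set"
  assumes U: "scott_open_rel prod_le U" and "(a, b) \<in> U"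
    and x: "limitin scott_topology x a sequentially"
    and y: "limitin scott_topology y b sequentially"
  shows "eventually (\<lambda>n. (x n, y n) \<in> U) sequentially"
proof -
  have "eventually (\<lambda>n. y n \<in> {q. (a, q) \<in> U}) sequentially"
    using limitin_scott_topology_rel_eventually[OF y scott_open_rel_section_right[OF U]] \<open>(a, b) \<in> U\<close>
    by simp
  then obtain N where N: "\<And>n. n \<ge> N \<Longrightarrow> (a, y n) \<in> U"
    unfolding eventually_sequentially by auto
  have "eventually (\<lambda>n. x n \<in> {p. (p, b) \<in> U \<and> (\<forall>n\<ge>N. (p, y n) \<in> U)}) sequentially"
    using \<open>(a, b) \<in> U\<close> N
    by (intro limitin_scott_topology_rel_eventually[OF x scott_open_rel_tail_section[OF U y]]) auto
  moreover have "eventually (\<lambda>n. n \<ge> N) sequentially" by (rule eventually_ge_at_top)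
  ultimately show ?thesis by eventually_elim auto
qed

lemma frechet_space_sequentially_open_imp_openin:
  assumes "frechet_space X" "U \<subseteq> topspace X"
    and seq_open: "\<And>s z. limitin X s z sequentially \<Longrightarrow> z \<in> U \<Longrightarrow> eventually (\<lambda>n. s n \<in> U) sequentially"
  shows "openin X U"
proof -
  let ?C = "topspace X - U"
  have "X closure_of ?C \<subseteq> ?C"
  proof
    fix z assume z: "z \<in> X closure_of ?C"
    then obtain s where s: "\<And>n. s n \<in> ?C" "limitin X s z sequentially"
      using \<open>frechet_space X\<close> unfolding frechet_space_def by blast
    have "z \<notin> U"
    proof
      assume "z \<in> U"
      then obtain n where "s n \<in> U"
        using eventually_happens'[OF sequentially_bot seq_open[OF s(2) \<open>z \<in> U\<close>]] by blast
      then show False using s(1) by blast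
    qed
    then show "z \<in> ?C" using closure_of_subset_topspace[of X ?C] z by blast
  qed
  then have "closedin X ?C" using closure_of_subset_eq[of ?C X] by simp
  then show ?thesis using \<open>U \<subseteq> topspace X\<close> by (simp add: openin_closedin_eq)
qed

theorem theorem3p5:
  assumes "frechet_space (prod_topology (scott_topology :: 'a::order topology) (scott_topology :: 'b::order topology))"
  shows "scott_topology_rel (prod_le :: 'a \<times> 'b \<Rightarrow> 'a \<times> 'b \<Rightarrow> bool)
           = prod_topology (scott_topology :: 'a::order topology) (scott_topology :: 'b::order topology)"
  unfolding topology_eq
proof (intro allI iffI)
  fix U :: "('a \<times> 'b) set"
  assume "openin (scott_topology_rel prod_le) U"
  then have U: "scott_open_rel prod_le U" by (simp add: openin_scott_topology_rel)
  show "openin (prod_topology scott_topology scott_topology) U"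
  proof (rule frechet_space_sequentially_open_imp_openin[OF assms])
    fix s z assume "limitin (prod_topology scott_topology scott_topology) s z sequentially" "z \<in> U"
    then show "eventually (\<lambda>n. s n \<in> U) sequentially"
      using eventually_in_scott_open_rel_prod[OF U, of "fst z" "snd z" "fst \<circ> s" "snd \<circ> s"]
      by (simp add: limitin_pairwise)
  qed simp
next
  fix U :: "('a \<times> 'b) set"
  assume "openin (prod_topology scott_topology scott_topology) U"
  then show "openin (scott_topology_rel prod_le) U"
    by (simp add: openin_scott_topology_rel openin_prod_topology_imp_scott_open_rel)
qed

end
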